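(* Let $r\in\mathcal R_n$ be a distance matrix of order $n$. For any two vectors $a=(a_1,\dots,a_n)\in A(r)$ and $b=(b_1,\dots,b_n)\in A(r)$ there exists a real number $h\ge0$ such that $\bar b=(b_1,\dots,b_n,h)\in A(r^a)$ (and also $\bar a=(a_1,\dots,a_n,h)\in A(r^b)$).
   Context: $\mathcal R_n$ is the set of real symmetric $n\times n$ matrices with zero diagonal, nonnegative entries and $r_{i,k}+r_{k,j}\ge r_{i,j}$. For $r\in\mathcal R_n$, $A(r)=\{a\in\mathbb R^n: |a_i-a_j|\le r_{i,j}\le a_i+a_j\ \forall i,j\}$ is the set of admissible vectors, and for $a\in A(r)$, $r^a\in\mathcal R_{n+1}$ is the matrix obtained by adding $a$ as last row and last column (with $0$ in the corner). *)

theory Defs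
  imports Main "HOL.Real"
begin

text \<open>Matrices of order n are functions nat => nat => real, only entries with
indices < n are meaningful; vectors of length n are functions nat => real,
only components with index < n are meaningful.\<close>

definition distmat :: "nat \<Rightarrow> (nat \<Rightarrow> nat \<Rightarrow> real) \<Rightarrow> bool" where
  "distmat n r \<longleftrightarrow>
     (\<forall>i<n. r i i = 0) \<and>
     (\<forall>i<n. \<forall>j<n. r i j = r j i) \<and>
     (\<forall>i<n. \<forall>j<n. r i j \<ge> 0) \<and>
     (\<forall>i<n. \<forall>j<n. \<forall>k<n. r i k + r k j \<ge> r i j)"

definition admissible :: "nat \<Rightarrow> (nat \<Rightarrow> nat \<Rightarrow> real) \<Rightarrow> (nat \<Rightarrow> real) \<Rightarrow> bool" where
  "admissible n r a \<longleftrightarrow>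
     (\<forall>i<n. \<forall>j<n. \<bar>a i - a j\<bar> \<le> r i j \<and> r i j \<le> a i + a j)"

definition extend :: "nat \<Rightarrow> (nat \<Rightarrow> nat \<Rightarrow> real) \<Rightarrow> (nat \<Rightarrow> real) \<Rightarrow> (nat \<Rightarrow> nat \<Rightarrow> real)" where
  "extend n r a = (\<lambda>i j. if i < n \<and> j < n then r i j
                         else if i < n \<and> j = n then a i
                         else if i = n \<and> j < n then a j
                         else 0)"

definition append_vec :: "nat \<Rightarrow> (nat \<Rightarrow> real) \<Rightarrow> real \<Rightarrow> (nat \<Rightarrow> real)" where
  "append_vec n v h = (\<lambda>i. if i < n then v i else h)"

end

theory Submission
  imports Defs
begin

text \<open>Appending h to b is admissible for r^a exactly when h lies in the interval
  [|a_i - b_i|, a_i + b_i] for every i; this condition is symmetric in a and b.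
  The intervals pairwise intersect, because |a_i - a_j| <= r_ij <= b_i + b_j and
  |b_i - b_j| <= r_ij <= a_i + a_j give |a_i - b_i| <= a_j + b_j, so their
  maximal left end point is a common value.\<close>

lemma admissible_extend_append_vec_iff:
  "admissible (Suc n) (extend n r a) (append_vec n b h) \<longleftrightarrow>
     admissible n r b \<and> 0 \<le> h \<and> (\<forall>i<n. \<bar>a i - b i\<bar> \<le> h \<and> h \<le> a i + b i)"
  unfolding admissible_def extend_def append_vec_def less_Suc_eq
  by (auto simp: abs_le_iff) fastforce+

lemma admissible_abs_diff_le_add:
  assumes "admissible n r a" "admissible n r b" "i < n" "j < n"
  shows "\<bar>a i - b i\<bar> \<le> a j + b j"
proof -
  have "\<bar>a i - a j\<bar> \<le> r i j" "r i j \<le> a i + a j"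
    and "\<bar>b i - b j\<bar> \<le> r i j" "r i j \<le> b i + b j"
    using assms unfolding admissible_def by auto
  then show ?thesis
    by (simp add: abs_le_iff)
qed

lemma common_point_of_intervals:
  fixes l u :: "'i \<Rightarrow> real"
  assumes "finite I"
    and "\<And>i j. i \<in> I \<Longrightarrow> j \<in> I \<Longrightarrow> l i \<le> u j"
    and "\<And>j. j \<in> I \<Longrightarrow> 0 \<le> u j"
  shows "\<exists>h\<ge>0. \<forall>i\<in>I. l i \<le> h \<and> h \<le> u i"
proof (intro exI conjI ballI)
  let ?h = "Max (insert 0 (l ` I))"
  show "0 \<le> ?h"
    using assms(1) by simp
  show "l i \<le> ?h" if "i \<in> I" for i
    using assms(1) that by simp
  show "?h \<le> u j" if "j \<in> I" for j
    using assms that by auto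
qed

theorem lemma3:
  fixes n :: nat and r :: "nat \<Rightarrow> nat \<Rightarrow> real" and a b :: "nat \<Rightarrow> real"
  assumes "distmat n r"
    and "admissible n r a"
    and "admissible n r b"
  shows "\<exists>h::real. h \<ge> 0 \<and>
           admissible (Suc n) (extend n r a) (append_vec n b h) \<and>
           admissible (Suc n) (extend n r b) (append_vec n a h)"
proof -
  have "\<exists>h\<ge>0. \<forall>i\<in>{..<n}. \<bar>a i - b i\<bar> \<le> h \<and> h \<le> a i + b i"
  proof (rule common_point_of_intervals)
    show "\<bar>a i - b i\<bar> \<le> a j + b j" if "i \<in> {..<n}" "j \<in> {..<n}" for i j
      using admissible_abs_diff_le_add assms(2,3) that by simp
    then show "0 \<le> a j + b j" if "j \<in> {..<n}" for j
      using that by (meson abs_ge_zero order_trans)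
  qed simp
  then obtain h where "0 \<le> h" and "\<forall>i<n. \<bar>a i - b i\<bar> \<le> h \<and> h \<le> a i + b i"
    by auto
  with assms(2,3) show ?thesis
    by (auto simp: admissible_extend_append_vec_iff abs_minus_commute add.commute)
qed

end
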